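(* Let $p>2$, $M>1$, $s_0>M$, $\ell\in\left(p,\min\left\{\frac{(p-1)^2+p-2}{p-2},p^*\right\}\right)$, and for $q\ge p+1$ let $\mathcal N_q$ be as in the context. There exists $\sigma>0$ such that $$\inf_{q\ge p+1}\ \inf_{u\in\mathcal N_q}\|u\|_{L^\infty(B)}\ge\sigma.$$
   Context: $B$ is the open unit ball of $\mathbb R^N$; $p^*=Np/(N-p)$ if $p<N$, $+\infty$ otherwise. $\mathcal C:=\{u\in W^{1,p}_{\mathrm{rad}}(B): u\ge0,\ u(r)\le u(s)\ \text{for }0<r\le s\le1\}$ (radial functions as functions of $r=|x|$). For $q\ge p+1$: $\tilde f_q(s)=s^{q-1}$ on $[0,s_0]$, $\tilde f_q(s)=s_0^{q-1}+\frac{q-1}{\ell-1}s_0^{q-\ell}(s^{\ell-1}-s_0^{\ell-1})$ for $s>s_0$, $\tilde f_q=0$ on $(-\infty,0)$; $\mathcal N_q:=\{u\in\mathcal C\setminus\{0\}: \int_B(|\nabla u|^p+|u|^p)dx=\int_B\tilde f_q(u)u\,dx\}$. *)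

theory Defs
  imports "HOL-Analysis.Analysis" "HOL-Probability.Essential_Supremum"
begin

text \<open>Unit ball of the Euclidean space 'a, N = DIM('a).\<close>
abbreviation unit_ball :: "'a::euclidean_space set" where
  "unit_ball \<equiv> ball 0 1"

definition sobolev_crit :: "nat \<Rightarrow> real \<Rightarrow> ereal" where
  "sobolev_crit N p = (if p < real N then ereal (real N * p / (real N - p)) else \<infinity>)"

definition test_fun :: "'a::euclidean_space set \<Rightarrow> ('a \<Rightarrow> real) \<Rightarrow> ('a \<Rightarrow> 'a) \<Rightarrow> bool" where
  "test_fun U \<phi> d\<phi> \<longleftrightarrow>
     (\<forall>x. (\<phi> has_derivative (\<lambda>h. d\<phi> x \<bullet> h)) (at x)) \<and> continuous_on UNIV d\<phi> \<and>
     compact (closure {x. \<phi> x \<noteq> 0}) \<and> closure {x. \<phi> x \<noteq> 0} \<subseteq> U"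

definition weak_gradient :: "'a::euclidean_space set \<Rightarrow> ('a \<Rightarrow> real) \<Rightarrow> ('a \<Rightarrow> 'a) \<Rightarrow> bool" where
  "weak_gradient U u g \<longleftrightarrow>
     (\<forall>\<phi> d\<phi>. test_fun U \<phi> d\<phi> \<longrightarrow>
        (LINT x:U|lebesgue. u x *\<^sub>R d\<phi> x) = - (LINT x:U|lebesgue. \<phi> x *\<^sub>R g x))"

definition in_Lp :: "real \<Rightarrow> 'a::euclidean_space set \<Rightarrow> ('a \<Rightarrow> 'b::euclidean_space) \<Rightarrow> bool" where
  "in_Lp p U u \<longleftrightarrow> u \<in> borel_measurable (lebesgue_on U) \<and>
                     set_integrable lebesgue U (\<lambda>x. norm (u x) powr p)"

definition sobolev_grad :: "real \<Rightarrow> 'a::euclidean_space set \<Rightarrow> ('a \<Rightarrow> real) \<Rightarrow> ('a \<Rightarrow> 'a) \<Rightarrow> bool" where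
  "sobolev_grad p U u g \<longleftrightarrow> in_Lp p U u \<and> in_Lp p U g \<and> weak_gradient U u g"

text \<open>The cone C: nonnegative radial W^{1,p}(B) functions, nondecreasing in r = |x|
  (stated for a pointwise representative).\<close>
definition cone_C :: "real \<Rightarrow> ('a::euclidean_space \<Rightarrow> real) set" where
  "cone_C p = {u. (\<exists>g. sobolev_grad p unit_ball u g) \<and>
      (\<forall>x\<in>unit_ball. \<forall>y\<in>unit_ball. norm x = norm y \<longrightarrow> u x = u y) \<and>
      (\<forall>x\<in>unit_ball. u x \<ge> 0) \<and>
      (\<forall>x\<in>unit_ball. \<forall>y\<in>unit_ball. 0 < norm x \<and> norm x \<le> norm y \<longrightarrow> u x \<le> u y)}"

definition f_tilde :: "real \<Rightarrow> real \<Rightarrow> real \<Rightarrow> real \<Rightarrow> real" where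
  "f_tilde s0 l q s =
     (if s < 0 then 0
      else if s \<le> s0 then s powr (q - 1)
      else s0 powr (q - 1) + (q - 1) / (l - 1) * s0 powr (q - l) * (s powr (l - 1) - s0 powr (l - 1)))"

text \<open>Nehari-type set N_q (u nonzero as an element of W^{1,p}, i.e. not a.e. zero;
  the gradient in the Nehari identity is the weak gradient).\<close>
definition nehari :: "real \<Rightarrow> real \<Rightarrow> real \<Rightarrow> real \<Rightarrow> ('a::euclidean_space \<Rightarrow> real) set" where
  "nehari p s0 l q = {u \<in> cone_C p. \<not> (AE x in lebesgue_on unit_ball. u x = 0) \<and>
      (\<exists>g. sobolev_grad p unit_ball u g \<and>
        (LINT x:unit_ball|lebesgue. norm (g x) powr p + \<bar>u x\<bar> powr p)
          = (LINT x:unit_ball|lebesgue. f_tilde s0 l q (u x) * u x))}"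

definition Linf_norm :: "('a::euclidean_space \<Rightarrow> real) \<Rightarrow> ereal" where
  "Linf_norm u = esssup (lebesgue_on unit_ball) (\<lambda>x. ereal \<bar>u x\<bar>)"

end

theory Submission
  imports Defs
begin

text \<open>Below the threshold \<open>s0\<close> the Nehari identity reads
  \<open>\<integral>|\<nabla>u|\<^sup>p + |u|\<^sup>p = \<integral>u\<^sup>q\<close>. If \<open>0 \<le> u \<le> m < 1 \<le> s0\<close> almost everywhere, then
  \<open>u\<^sup>q \<le> m\<^sup>q\<^sup>-\<^sup>p u\<^sup>p\<close>, so \<open>\<integral>|u|\<^sup>p \<le> m\<^sup>q\<^sup>-\<^sup>p \<integral>|u|\<^sup>p\<close> and \<open>u = 0\<close> a.e., contradicting
  \<open>u \<in> N\<^sub>q\<close>. Hence every element of every \<open>N\<^sub>q\<close> has \<open>L\<^sup>\<infinity>\<close> norm at least \<open>\<sigma> = 1\<close>.\<close>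

lemma f_tilde_mult_eq_powr:
  assumes "0 \<le> s" "s \<le> s0"
  shows "f_tilde s0 l q s * s = s powr q"
proof -
  have "f_tilde s0 l q s * s = s powr (q - 1) * s powr 1"
    using assms by (simp add: f_tilde_def)
  also have "\<dots> = s powr (q - 1 + 1)"
    by (rule powr_add[symmetric])
  also have "\<dots> = s powr q"
    by simp
  finally show ?thesis .
qed

lemma powr_le_mult_powr:
  fixes s m p q :: real
  assumes "0 \<le> s" "s \<le> m" "p \<le> q"
  shows "s powr q \<le> m powr (q - p) * s powr p"
proof -
  have "s powr q = s powr (q - p) * s powr p"
    by (simp add: powr_add[symmetric])
  also have "\<dots> \<le> m powr (q - p) * s powr p"
    using assms by (intro mult_right_mono powr_mono2) auto
  finally show ?thesis .
qed

lemma Linf_norm_lessE: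
  fixes u :: "'a::euclidean_space \<Rightarrow> real"
  assumes "Linf_norm u < ereal c" "0 < c" "\<forall>x\<in>unit_ball. 0 \<le> u x"
  obtains m where "0 \<le> m" "m < c" "AE x in lebesgue_on unit_ball. 0 \<le> u x \<and> u x \<le> m"
proof
  define m where "m = max 0 (real_of_ereal (Linf_norm u))"
  show "0 \<le> m" unfolding m_def by simp
  show "m < c" using assms(1,2) unfolding m_def by (cases "Linf_norm u") auto
  have "AE x in lebesgue_on unit_ball. ereal \<bar>u x\<bar> \<le> Linf_norm u"
    unfolding Linf_norm_def by (rule esssup_AE)
  moreover have "AE x in lebesgue_on unit_ball. x \<in> (unit_ball :: 'a set)"
    by (rule AE_I2) (simp add: space_restrict_space)
  ultimately show "AE x in lebesgue_on unit_ball. 0 \<le> u x \<and> u x \<le> m"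
  proof eventually_elim
    case (elim x)
    then show ?case using assms(1,3) unfolding m_def by (cases "Linf_norm u") auto
  qed
qed

lemma nehari_Lp_le_integral_f_tilde:
  fixes u :: "'a::euclidean_space \<Rightarrow> real"
  assumes "u \<in> nehari p s0 l q"
  shows "integrable (lebesgue_on unit_ball) (\<lambda>x. \<bar>u x\<bar> powr p)"
    and "integral\<^sup>L (lebesgue_on unit_ball) (\<lambda>x. \<bar>u x\<bar> powr p)
           \<le> integral\<^sup>L (lebesgue_on unit_ball) (\<lambda>x. f_tilde s0 l q (u x) * u x)"
proof -
  from assms obtain g where sg: "sobolev_grad p unit_ball u g"
    and eq: "(LINT x:unit_ball|lebesgue. norm (g x) powr p + \<bar>u x\<bar> powr p)
          = (LINT x:unit_ball|lebesgue. f_tilde s0 l q (u x) * u x)"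
    unfolding nehari_def by blast
  have gint: "integrable (lebesgue_on unit_ball) (\<lambda>x. norm (g x) powr p)"
    using sg by (simp add: sobolev_grad_def in_Lp_def set_integrable_def integrable_restrict_space)
  show uint: "integrable (lebesgue_on unit_ball) (\<lambda>x. \<bar>u x\<bar> powr p)"
    using sg by (simp add: sobolev_grad_def in_Lp_def set_integrable_def integrable_restrict_space)
  have "integral\<^sup>L (lebesgue_on unit_ball) (\<lambda>x. \<bar>u x\<bar> powr p)
       \<le> integral\<^sup>L (lebesgue_on unit_ball) (\<lambda>x. norm (g x) powr p + \<bar>u x\<bar> powr p)"
    using uint gint by (intro integral_mono) auto
  also have "\<dots> = integral\<^sup>L (lebesgue_on unit_ball) (\<lambda>x. f_tilde s0 l q (u x) * u x)"
    using eq by (simp add: set_lebesgue_integral_def integral_restrict_space)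
  finally show "integral\<^sup>L (lebesgue_on unit_ball) (\<lambda>x. \<bar>u x\<bar> powr p)
           \<le> integral\<^sup>L (lebesgue_on unit_ball) (\<lambda>x. f_tilde s0 l q (u x) * u x)" .
qed

lemma nehari_Linf_norm_ge_1:
  fixes u :: "'a::euclidean_space \<Rightarrow> real"
  assumes "1 \<le> s0" "p < q" and u: "u \<in> nehari p s0 l q"
  shows "Linf_norm u \<ge> 1"
proof (rule ccontr)
  define N where "N = lebesgue_on (unit_ball :: 'a set)"
  define I where "I = integral\<^sup>L N (\<lambda>x. \<bar>u x\<bar> powr p)"
  assume "\<not> Linf_norm u \<ge> 1"
  then have "Linf_norm u < ereal 1"
    by (metis not_le one_ereal_def)
  moreover have "\<forall>x\<in>unit_ball. 0 \<le> u x"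
    using u unfolding nehari_def cone_C_def by blast
  ultimately obtain m where m: "0 \<le> m" "m < 1" and bound: "AE x in N. 0 \<le> u x \<and> u x \<le> m"
    unfolding N_def by (rule Linf_norm_lessE[OF _ zero_less_one])
  have uint: "integrable N (\<lambda>x. \<bar>u x\<bar> powr p)"
    using nehari_Lp_le_integral_f_tilde(1)[OF u] unfolding N_def .
  have "I \<le> integral\<^sup>L N (\<lambda>x. f_tilde s0 l q (u x) * u x)"
    using nehari_Lp_le_integral_f_tilde(2)[OF u] unfolding N_def I_def .
  also have "\<dots> \<le> integral\<^sup>L N (\<lambda>x. m powr (q - p) * \<bar>u x\<bar> powr p)"
  proof (rule integral_mono_AE')
    show "AE x in N. f_tilde s0 l q (u x) * u x \<le> m powr (q - p) * \<bar>u x\<bar> powr p"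
      using bound
    proof eventually_elim
      case (elim x)
      then show ?case
        using m assms(1,2) f_tilde_mult_eq_powr[of "u x" s0] powr_le_mult_powr[of "u x" m p q]
        by simp
    qed
  qed (use uint in auto)
  also have "\<dots> = m powr (q - p) * I"
    unfolding I_def by simp
  finally have "I \<le> m powr (q - p) * I" .
  moreover have "m powr (q - p) < 1"
    using powr_less_mono2[of "q - p" m 1] m assms(2) by simp
  moreover have "0 \<le> I"
    unfolding I_def by simp
  ultimately have "I = 0"
    by (smt (verit) mult_le_cancel_right1)
  then have "AE x in N. \<bar>u x\<bar> powr p = 0"
    using integral_nonneg_eq_0_iff_AE[OF uint] unfolding I_def by simp
  then have "AE x in N. u x = 0"
    by eventually_elim simp
  with u show False
    unfolding nehari_def N_def by blast
qed

theorem lemma5p2: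
  fixes p M s0 l :: real
  assumes "p > 2" and "M > 1" and "s0 > M"
    and "l > p"
    and "l < ((p - 1)\<^sup>2 + p - 2) / (p - 2)"
    and "ereal l < sobolev_crit DIM('a::euclidean_space) p"
  shows "\<exists>\<sigma>>0. (INF q\<in>{p + 1..}. INF u\<in>(nehari p s0 l q :: ('a \<Rightarrow> real) set). Linf_norm u) \<ge> ereal \<sigma>"
proof (intro exI conjI INF_greatest)
  show "(0::real) < 1" by simp
  fix q and u :: "'a \<Rightarrow> real"
  assume "q \<in> {p + 1..}" and "u \<in> nehari p s0 l q"
  moreover have "1 \<le> s0" using assms(2,3) by simp
  ultimately have "1 \<le> Linf_norm u"
    by (intro nehari_Linf_norm_ge_1) auto
  then show "ereal 1 \<le> Linf_norm u"
    by (simp add: one_ereal_def)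
qed

end
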